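(* Let $k\ge1$, $R\in\{\mathbb{Z},\mathbb{Z}_2\}$, let $K$ be a finite simplicial $k$-complex with oriented simplices, and let $M$ be an $R$-orientable closed PL $2k$-manifold, or $M=\mathbb{R}^{2k}$. Then there is a homomorphism $\psi\colon C_k(K;R)\to H_k(M;R)$ such that $[\omega_\psi]_F-\tilde o(K)$ is trivial (over $R$) if and only if the following system of quadratic equations has a solution in $R$: the unknowns are $x_{\eta,\mu}$, one for each pair of a $(k-1)$-simplex $\eta$ and a $k$-simplex $\mu$ of $K$ with $\eta\cap\mu=\emptyset$, and $y^1_\sigma,\dots,y^b_\sigma$, for each $k$-simplex $\sigma$ (write $\mathbf y_\sigma=(y^1_\sigma,\dots,y^b_\sigma)^T$); and for each pair $\{\sigma,\tau\}$ of disjoint $k$-simplices there is the equation $$\sum_{\eta,\mu}x_{\eta,\mu}\varphi_{\eta,\mu}(\sigma\times\tau)+\mathbf y_\sigma^T A_\Omega\mathbf y_\tau=\vartheta_g(\sigma\times\tau),$$ where $g\colon|K|\to\mathbb{R}^{2k}$ is a fixed general position map.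
   Context: $L=K^{(k-1)}$. General position: $g|_{|L|}$ injective, finitely many points with more than one preimage, each with exactly two preimages, both in $|K|\setminus|L|$, transversal crossings. $g(\sigma)\cdot g(\tau)=\sum_x\mathrm{sgn}(x)$ over points $x=g(y)=g(y')$, $y\in\sigma,y'\in\tau$; signs $1$ for $R=\mathbb{Z}_2$, and for $R=\mathbb{Z}$, $+1$ iff the product orientation agrees with that of the target. $\tilde K=\{\sigma\times\tau:\sigma,\tau\in K\text{ disjoint}\}$; $C^{2k}_{\mathrm{skw}}(\tilde K;R)$: $R$-valued functions on pairs of disjoint $k$-simplices with $\xi(\sigma\times\tau)=(-1)^k\xi(\tau\times\sigma)$; $\vartheta_g(\sigma\times\tau)=g(\sigma)\cdot g(\tau)$. $[\eta:\sigma]=\pm1$ for a $(k-1)$-simplex $\eta\subseteq\sigma$ according to whether the induced orientation (removing $v_i$ from $[v_0,\dots,v_k]$ gives $(-1)^i[v_0,\dots,\hat v_i,\dots,v_k]$) agrees with that of $\eta$. For disjoint $\eta,\mu$: $\varphi_{\eta,\mu}(\sigma\times\tau)=[\eta:\sigma]$ if $\eta\subseteq\sigma,\tau=\mu$; $(-1)^k[\eta:\tau]$ if $\eta\subseteq\tau,\sigma=\mu$; $0$ otherwise. $F$ = $R$-span of the $\varphi_{\eta,\mu}$; $[\xi]_F$ = class modulo $F$; $\tilde o(K)=[\vartheta_g]_F$. $\Omega$ is the intersection form of $M$ on $H_k(M;R)$ (bilinear, $(-1)^k$-symmetric, zero on torsion for $R=\mathbb{Z}$); $\omega_\psi(\sigma\times\tau)=\Omega(\psi(\sigma),\psi(\tau))$.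 If $R=\mathbb{Z}$, write $H_k(M;\mathbb{Z})\cong\mathbb{Z}^b\oplus T$ with $T$ the torsion subgroup and let $\pi\colon H_k(M;\mathbb{Z})\to\mathbb{Z}^b$ be the induced projection; if $R=\mathbb{Z}_2$, $H_k(M;\mathbb{Z}_2)\cong\mathbb{Z}_2^b$ and $\pi$ is a fixed isomorphism. $A_\Omega\in R^{b\times b}$ is the matrix with $\Omega(h,h')=\pi(h)^TA_\Omega\pi(h')$ for all $h,h'$. *)

theory Defs
  imports Complex_Main "HOL-Library.Z2"
begin

definition ring_iso :: "('a::comm_ring_1 \<Rightarrow> 'b::comm_ring_1) \<Rightarrow> bool" where
  "ring_iso f \<longleftrightarrow> bij f \<and> f 1 = 1 \<and> (\<forall>a b. f (a + b) = f a + f b) \<and> (\<forall>a b. f (a * b) = f a * f b)"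

definition R_is_Z_or_Z2 :: "'r::comm_ring_1 itself \<Rightarrow> bool" where
  "R_is_Z_or_Z2 _ \<longleftrightarrow> (\<exists>f::'r \<Rightarrow> int. ring_iso f) \<or> (\<exists>f::'r \<Rightarrow> bit. ring_iso f)"

definition simplicial_k_complex :: "nat \<Rightarrow> 'v set set \<Rightarrow> bool" where
  "simplicial_k_complex k K \<longleftrightarrow> finite K \<and>
     (\<forall>s\<in>K. finite s \<and> s \<noteq> {} \<and> card s \<le> k + 1 \<and> (\<forall>t. t \<subseteq> s \<and> t \<noteq> {} \<longrightarrow> t \<in> K))"

definition simplices :: "'v set set \<Rightarrow> nat \<Rightarrow> 'v set set" where
  "simplices K j = {s \<in> K. card s = j + 1}"

text \<open>Orientations: ori s = True means s is oriented as [v0,...,vj] with v0 < ... < vj,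
  ori s = False means the opposite orientation.\<close>
definition incidence :: "('v::linorder set \<Rightarrow> bool) \<Rightarrow> 'v set \<Rightarrow> 'v set \<Rightarrow> 'r::comm_ring_1" where
  "incidence ori \<eta> \<sigma> =
     (if \<eta> \<subseteq> \<sigma> \<and> card (\<sigma> - \<eta>) = 1 then
        (let v = the_elem (\<sigma> - \<eta>); i = card {u \<in> \<sigma>. u < v}
         in (if ori \<sigma> = ori \<eta> then 1 else -1) * (-1) ^ i)
      else 0)"

definition phi :: "nat \<Rightarrow> ('v::linorder set \<Rightarrow> bool) \<Rightarrow> 'v set \<Rightarrow> 'v set \<Rightarrow> 'v set \<Rightarrow> 'v set \<Rightarrow> 'r::comm_ring_1" where
  "phi k ori \<eta> \<mu> \<sigma> \<tau> =
     (if \<eta> \<subseteq> \<sigma> \<and> \<tau> = \<mu> then incidence ori \<eta> \<sigma>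
      else if \<eta> \<subseteq> \<tau> \<and> \<sigma> = \<mu> then (-1) ^ k * incidence ori \<eta> \<tau>
      else 0)"

text \<open>Ordered pairs of disjoint k-simplices (the cells sigma x tau of the deleted product).\<close>
definition dpairs :: "'v set set \<Rightarrow> nat \<Rightarrow> ('v set \<times> 'v set) set" where
  "dpairs K k = {(\<sigma>, \<tau>). \<sigma> \<in> simplices K k \<and> \<tau> \<in> simplices K k \<and> \<sigma> \<inter> \<tau> = {}}"

definition etamu :: "'v set set \<Rightarrow> nat \<Rightarrow> ('v set \<times> 'v set) set" where
  "etamu K k = {(\<eta>, \<mu>). \<eta> \<in> simplices K (k - 1) \<and> \<mu> \<in> simplices K k \<and> \<eta> \<inter> \<mu> = {}}"

definition skew_cochain :: "nat \<Rightarrow> 'v set set \<Rightarrow> ('v set \<Rightarrow> 'v set \<Rightarrow> 'r::comm_ring_1) \<Rightarrow> bool" where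
  "skew_cochain k K \<xi> \<longleftrightarrow> (\<forall>(\<sigma>, \<tau>) \<in> dpairs K k. \<xi> \<sigma> \<tau> = (-1) ^ k * \<xi> \<tau> \<sigma>)"

definition in_F :: "nat \<Rightarrow> 'v::linorder set set \<Rightarrow> ('v set \<Rightarrow> bool) \<Rightarrow> ('v set \<Rightarrow> 'v set \<Rightarrow> 'r::comm_ring_1) \<Rightarrow> bool" where
  "in_F k K ori \<xi> \<longleftrightarrow> (\<exists>x :: 'v set \<Rightarrow> 'v set \<Rightarrow> 'r.
     \<forall>(\<sigma>, \<tau>) \<in> dpairs K k. \<xi> \<sigma> \<tau> = (\<Sum>(\<eta>, \<mu>) \<in> etamu K k. x \<eta> \<mu> * phi k ori \<eta> \<mu> \<sigma> \<tau>))"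

definition chains :: "'v set set \<Rightarrow> nat \<Rightarrow> ('v set \<Rightarrow> 'r::comm_ring_1) set" where
  "chains K k = {c. \<forall>s. s \<notin> simplices K k \<longrightarrow> c s = 0}"

definition elem_chain :: "'v set \<Rightarrow> 'v set \<Rightarrow> 'r::comm_ring_1" where
  "elem_chain \<sigma> = (\<lambda>s. if s = \<sigma> then 1 else 0)"

definition chain_hom :: "'v set set \<Rightarrow> nat \<Rightarrow> ('r::comm_ring_1 \<Rightarrow> 'h::ab_group_add \<Rightarrow> 'h) \<Rightarrow> (('v set \<Rightarrow> 'r) \<Rightarrow> 'h) \<Rightarrow> bool" where
  "chain_hom K k smul \<psi> \<longleftrightarrow>
     (\<forall>c \<in> chains K k. \<forall>d \<in> chains K k. \<psi> (\<lambda>s. c s + d s) = \<psi> c + \<psi> d) \<and>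
     (\<forall>r. \<forall>c \<in> chains K k. \<psi> (\<lambda>s. r * c s) = smul r (\<psi> c))"

definition qform :: "nat \<Rightarrow> (nat \<Rightarrow> nat \<Rightarrow> 'r::comm_ring_1) \<Rightarrow> (nat \<Rightarrow> 'r) \<Rightarrow> (nat \<Rightarrow> 'r) \<Rightarrow> 'r" where
  "qform b A u w = (\<Sum>i<b. \<Sum>j<b. u i * A i j * w j)"

text \<open>Abstract data of the intersection form of M on H = H_k(M;R) (an R-module via smul):
  Omega is bilinear and (-1)^k-symmetric; pi : H -> R^b is R-linear, onto R^b, with kernel
  the torsion submodule (so pi is the projection H = R^b + T -> R^b for R = Z, and an
  isomorphism for R = Z_2); and Omega(h,h') = pi(h)^T A pi(h').\<close>
definition intersection_form_data ::
  "nat \<Rightarrow> ('r::comm_ring_1 \<Rightarrow> 'h::ab_group_add \<Rightarrow> 'h) \<Rightarrow> ('h \<Rightarrow> 'h \<Rightarrow> 'r) \<Rightarrow> nat \<Rightarrow> ('h \<Rightarrow> nat \<Rightarrow> 'r) \<Rightarrow> (nat \<Rightarrow> nat \<Rightarrow> 'r) \<Rightarrow> bool" where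
  "intersection_form_data k smul \<Omega> b \<pi> A \<longleftrightarrow>
     (\<forall>h h' g. \<Omega> (h + h') g = \<Omega> h g + \<Omega> h' g) \<and>
     (\<forall>r h g. \<Omega> (smul r h) g = r * \<Omega> h g) \<and>
     (\<forall>h g. \<Omega> h g = (-1) ^ k * \<Omega> g h) \<and>
     (\<forall>h h'. \<pi> (h + h') = (\<lambda>i. \<pi> h i + \<pi> h' i)) \<and>
     (\<forall>r h. \<pi> (smul r h) = (\<lambda>i. r * \<pi> h i)) \<and>
     (\<forall>h i. b \<le> i \<longrightarrow> \<pi> h i = 0) \<and>
     (\<forall>v. (\<forall>i. b \<le> i \<longrightarrow> v i = 0) \<longrightarrow> (\<exists>h. \<pi> h = v)) \<and>
     {h. \<pi> h = (\<lambda>_. 0)} = {h. \<exists>r. r \<noteq> 0 \<and> smul r h = 0} \<and>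
     (\<forall>h h'. \<Omega> h h' = qform b A (\<pi> h) (\<pi> h'))"

end

theory Submission
  imports Defs
begin

text \<open>The theorem is a change of variables: with \<open>y\<^sub>\<sigma> = \<pi>(\<psi>(\<sigma>))\<close> the cochain
  \<open>\<omega>\<^sub>\<psi>\<close> is the Gram cochain \<open>y\<^sub>\<sigma>\<^sup>T A y\<^sub>\<tau>\<close>, and membership in \<open>F\<close> is the existence
  of the coefficients \<open>x\<close> (up to sign). Conversely every family \<open>y\<close> arises this way,
  since \<open>\<pi>\<close> is onto \<open>R\<^sup>b\<close> and a homomorphism on \<open>C\<^sub>k(K;R)\<close> may prescribe arbitrary values
  on the elementary chains.\<close>

lemma finite_simplices:
  assumes "simplicial_k_complex k K"
  shows "finite (simplices K j)"
  using assms unfolding simplicial_k_complex_def simplices_def by auto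

lemma qform_cong:
  assumes "\<And>i. i < b \<Longrightarrow> u i = u' i" and "\<And>i. i < b \<Longrightarrow> w i = w' i"
  shows "qform b A u w = qform b A u' w'"
  using assms unfolding qform_def by simp

lemma in_F_diff_iff:
  "in_F k K ori (\<lambda>\<sigma> \<tau>. \<omega> \<sigma> \<tau> - \<theta> \<sigma> \<tau>) \<longleftrightarrow>
     (\<exists>x. \<forall>(\<sigma>, \<tau>) \<in> dpairs K k.
        (\<Sum>(\<eta>, \<mu>) \<in> etamu K k. x \<eta> \<mu> * phi k ori \<eta> \<mu> \<sigma> \<tau>) + \<omega> \<sigma> \<tau> = \<theta> \<sigma> \<tau>)"
  (is "_ \<longleftrightarrow> (\<exists>x. ?eqs x)")
proof -
  have neg: "(\<Sum>(\<eta>, \<mu>) \<in> etamu K k. - x \<eta> \<mu> * phi k ori \<eta> \<mu> \<sigma> \<tau>)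
      = - (\<Sum>(\<eta>, \<mu>) \<in> etamu K k. x \<eta> \<mu> * phi k ori \<eta> \<mu> \<sigma> \<tau>)" for x \<sigma> \<tau>
    by (simp only: case_prod_unfold mult_minus_left sum_negf)
  have negated: "?eqs (\<lambda>\<eta> \<mu>. - x \<eta> \<mu>) \<longleftrightarrow> (\<forall>(\<sigma>, \<tau>) \<in> dpairs K k.
          \<omega> \<sigma> \<tau> - \<theta> \<sigma> \<tau> = (\<Sum>(\<eta>, \<mu>) \<in> etamu K k. x \<eta> \<mu> * phi k ori \<eta> \<mu> \<sigma> \<tau>))" for x
    unfolding neg by (intro ball_cong refl) (auto simp: algebra_simps)
  show ?thesis
    unfolding in_F_def
  proof
    assume "\<exists>x. \<forall>(\<sigma>, \<tau>) \<in> dpairs K k.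
      \<omega> \<sigma> \<tau> - \<theta> \<sigma> \<tau> = (\<Sum>(\<eta>, \<mu>) \<in> etamu K k. x \<eta> \<mu> * phi k ori \<eta> \<mu> \<sigma> \<tau>)"
    then obtain x where "\<forall>(\<sigma>, \<tau>) \<in> dpairs K k.
      \<omega> \<sigma> \<tau> - \<theta> \<sigma> \<tau> = (\<Sum>(\<eta>, \<mu>) \<in> etamu K k. x \<eta> \<mu> * phi k ori \<eta> \<mu> \<sigma> \<tau>)" ..
    then have "?eqs (\<lambda>\<eta> \<mu>. - x \<eta> \<mu>)" using negated[of x] by blast
    then show "\<exists>x. ?eqs x" by (rule exI[where x = "\<lambda>\<eta> \<mu>. - x \<eta> \<mu>"])
  next
    assume "\<exists>x. ?eqs x"
    then obtain x where "?eqs (\<lambda>\<eta> \<mu>. - (- x \<eta> \<mu>))" by auto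
    then have "\<forall>(\<sigma>, \<tau>) \<in> dpairs K k.
      \<omega> \<sigma> \<tau> - \<theta> \<sigma> \<tau> = (\<Sum>(\<eta>, \<mu>) \<in> etamu K k. - x \<eta> \<mu> * phi k ori \<eta> \<mu> \<sigma> \<tau>)"
      using negated[of "\<lambda>\<eta> \<mu>. - x \<eta> \<mu>"] by blast
    then show "\<exists>x. \<forall>(\<sigma>, \<tau>) \<in> dpairs K k.
      \<omega> \<sigma> \<tau> - \<theta> \<sigma> \<tau> = (\<Sum>(\<eta>, \<mu>) \<in> etamu K k. x \<eta> \<mu> * phi k ori \<eta> \<mu> \<sigma> \<tau>)"
      by (rule exI[where x = "\<lambda>\<eta> \<mu>. - x \<eta> \<mu>"])
  qed
qed

lemma (in module) chain_hom_extension: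
  assumes "finite (simplices K k)"
  shows "\<exists>\<psi>. chain_hom K k scale \<psi> \<and> (\<forall>s \<in> simplices K k. \<psi> (elem_chain s) = v s)"
proof (intro exI conjI ballI)
  define \<psi> where "\<psi> c = (\<Sum>s \<in> simplices K k. scale (c s) (v s))" for c
  show "chain_hom K k scale \<psi>"
    unfolding chain_hom_def \<psi>_def by (simp add: scale_left_distrib sum.distrib scale_sum_right)
  fix s assume "s \<in> simplices K k"
  then have "\<psi> (elem_chain s) = (\<Sum>t \<in> simplices K k. if t = s then v t else 0)"
    unfolding \<psi>_def elem_chain_def by (intro sum.cong) auto
  with assms \<open>s \<in> simplices K k\<close> show "\<psi> (elem_chain s) = v s" by simp
qed

lemma intersection_form_data_gram:
  "intersection_form_data k smul \<Omega> b \<pi> A \<Longrightarrow> \<Omega> h h' = qform b A (\<pi> h) (\<pi> h')"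
  unfolding intersection_form_data_def by blast

lemma intersection_form_data_lift:
  assumes "intersection_form_data k smul \<Omega> b \<pi> A"
  shows "\<exists>h. \<forall>i < b. \<pi> h i = u i"
proof -
  have "\<exists>h. \<pi> h = (\<lambda>i. if i < b then u i else 0)"
    using assms unfolding intersection_form_data_def by simp
  then show ?thesis by (metis (full_types))
qed

theorem theorem14:
  fixes k :: nat
    and K :: "'v::linorder set set"
    and ori :: "'v set \<Rightarrow> bool"
    and smul :: "'r::comm_ring_1 \<Rightarrow> 'h::ab_group_add \<Rightarrow> 'h"
    and \<Omega> :: "'h \<Rightarrow> 'h \<Rightarrow> 'r"
    and b :: nat
    and \<pi> :: "'h \<Rightarrow> nat \<Rightarrow> 'r"
    and A :: "nat \<Rightarrow> nat \<Rightarrow> 'r"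
    and \<theta> :: "'v set \<Rightarrow> 'v set \<Rightarrow> 'r"
  assumes "1 \<le> k"
    and "R_is_Z_or_Z2 TYPE('r)"
    and "simplicial_k_complex k K"
    and "module smul"
    and "intersection_form_data k smul \<Omega> b \<pi> A"
    and "skew_cochain k K \<theta>"
  shows "(\<exists>\<psi>. chain_hom K k smul \<psi> \<and>
            in_F k K ori (\<lambda>\<sigma> \<tau>. \<Omega> (\<psi> (elem_chain \<sigma>)) (\<psi> (elem_chain \<tau>)) - \<theta> \<sigma> \<tau>))
     \<longleftrightarrow>
         (\<exists>(x :: 'v set \<Rightarrow> 'v set \<Rightarrow> 'r) (y :: 'v set \<Rightarrow> nat \<Rightarrow> 'r).
            \<forall>(\<sigma>, \<tau>) \<in> dpairs K k.
              (\<Sum>(\<eta>, \<mu>) \<in> etamu K k. x \<eta> \<mu> * phi k ori \<eta> \<mu> \<sigma> \<tau>) + qform b A (y \<sigma>) (y \<tau>) = \<theta> \<sigma> \<tau>)"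
    (is "(\<exists>\<psi>. _ \<and> in_F k K ori (\<lambda>\<sigma> \<tau>. ?\<omega> \<psi> \<sigma> \<tau> - _)) \<longleftrightarrow> (\<exists>x y. ?eqs x y)")
proof
  assume "\<exists>\<psi>. chain_hom K k smul \<psi> \<and> in_F k K ori (\<lambda>\<sigma> \<tau>. ?\<omega> \<psi> \<sigma> \<tau> - \<theta> \<sigma> \<tau>)"
  then obtain \<psi> x where "\<forall>(\<sigma>, \<tau>) \<in> dpairs K k.
      (\<Sum>(\<eta>, \<mu>) \<in> etamu K k. x \<eta> \<mu> * phi k ori \<eta> \<mu> \<sigma> \<tau>) + ?\<omega> \<psi> \<sigma> \<tau> = \<theta> \<sigma> \<tau>"
    unfolding in_F_diff_iff by blast
  then have "?eqs x (\<lambda>s. \<pi> (\<psi> (elem_chain s)))"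
    using intersection_form_data_gram[OF assms(5)] by simp
  then show "\<exists>x y. ?eqs x y"
    by (rule exI[of _ x, OF exI[of _ "\<lambda>s. \<pi> (\<psi> (elem_chain s))"]])
next
  assume "\<exists>x y. ?eqs x y"
  then obtain x y where eqs: "?eqs x y" by blast
  have "\<forall>s. \<exists>h. \<forall>i < b. \<pi> h i = y s i"
    using intersection_form_data_lift[OF assms(5)] by blast
  then obtain h where h: "\<And>s i. i < b \<Longrightarrow> \<pi> (h s) i = y s i" by metis
  obtain \<psi> where \<psi>: "chain_hom K k smul \<psi>" "\<forall>s \<in> simplices K k. \<psi> (elem_chain s) = h s"
    using module.chain_hom_extension[OF assms(4) finite_simplices[OF assms(3)]] by blast
  have "?\<omega> \<psi> \<sigma> \<tau> = qform b A (y \<sigma>) (y \<tau>)" if "(\<sigma>, \<tau>) \<in> dpairs K k" for \<sigma> \<tau>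
  proof -
    have "\<psi> (elem_chain \<sigma>) = h \<sigma>" "\<psi> (elem_chain \<tau>) = h \<tau>"
      using that \<psi>(2) unfolding dpairs_def by auto
    then show ?thesis
      unfolding intersection_form_data_gram[OF assms(5)] by (auto intro: qform_cong h)
  qed
  then have "\<forall>(\<sigma>, \<tau>) \<in> dpairs K k.
      (\<Sum>(\<eta>, \<mu>) \<in> etamu K k. x \<eta> \<mu> * phi k ori \<eta> \<mu> \<sigma> \<tau>) + ?\<omega> \<psi> \<sigma> \<tau> = \<theta> \<sigma> \<tau>"
    using eqs by auto
  then have "in_F k K ori (\<lambda>\<sigma> \<tau>. ?\<omega> \<psi> \<sigma> \<tau> - \<theta> \<sigma> \<tau>)"
    unfolding in_F_diff_iff by (rule exI[of _ x])
  with \<psi>(1) show "\<exists>\<psi>. chain_hom K k smul \<psi> \<and> in_F k K ori (\<lambda>\<sigma> \<tau>. ?\<omega> \<psi> \<sigma> \<tau> - \<theta> \<sigma> \<tau>)"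
    by blast
qed

end
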